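(* The orbit space $\mathbb{C}P^5/T^4$ is homeomorphic to the join $S^2\ast\mathbb{C}P^2$.
   Context: The compact torus $T^4=(S^1)^4$ acts on $\mathbb{C}P^5$, with homogeneous coordinates $[z_{12}:z_{13}:z_{14}:z_{23}:z_{24}:z_{34}]$, by $z_{ij}\mapsto t_it_jz_{ij}$, i.e. via the composition of the second symmetric power $T^4\to T^6$, $(t_1,\dots,t_4)\mapsto(t_1t_2,t_1t_3,t_1t_4,t_2t_3,t_2t_4,t_3t_4)$, with the standard action of $T^6$ on $\mathbb{C}P^5$. *)

theory Defs
  imports "HOL-Analysis.Analysis"
begin

text \<open>Quotient topology of X by a relation R (intended an equivalence relation on
  topspace X): points are the equivalence classes, a set of classes is open iff
  its union is open in X.\<close>
definition quotient_top :: "'a topology \<Rightarrow> ('a \<Rightarrow> 'a \<Rightarrow> bool) \<Rightarrow> 'a set topology" where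
  "quotient_top X R = topology (\<lambda>U.
     U \<subseteq> (\<lambda>x. {y \<in> topspace X. R x y}) ` topspace X \<and> openin X (\<Union>U))"

text \<open>Complex projective space CP^(n-1) = (C^n - 0) / C^*, with C^n = complex^'n.\<close>
definition CP :: "('n::finite) itself \<Rightarrow> (complex ^ 'n) set topology" where
  "CP _ = quotient_top (top_of_set (UNIV - {0 :: complex ^ 'n}))
            (\<lambda>z w. \<exists>c::complex. c \<noteq> 0 \<and> w = c *s z)"

text \<open>Second symmetric power T^4 -> T^6, coordinates ordered 12,13,14,23,24,34
  (in the numeral types, index 4 of type 4 is 0 and index 6 of type 6 is 0).\<close>
definition sym2 :: "complex ^ 4 \<Rightarrow> complex ^ 6" where
  "sym2 t = (\<chi> k. if k = 1 then t$1 * t$2 else if k = 2 then t$1 * t$3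
        else if k = 3 then t$1 * t$4 else if k = 4 then t$2 * t$3
        else if k = 5 then t$2 * t$4 else t$3 * t$4)"

definition torus4 :: "(complex ^ 4) set" where
  "torus4 = {t. \<forall>i. norm (t$i) = 1}"

definition act :: "complex ^ 4 \<Rightarrow> complex ^ 6 \<Rightarrow> complex ^ 6" where
  "act t z = (\<chi> k. sym2 t $ k * z $ k)"

definition CP5_mod_T4 :: "(complex ^ 6) set set topology" where
  "CP5_mod_T4 = quotient_top (CP TYPE(6))
     (\<lambda>A B. \<exists>z\<in>A. \<exists>t\<in>torus4. act t z \<in> B)"

definition join_top :: "'a topology \<Rightarrow> 'b topology \<Rightarrow> ('a \<times> 'b \<times> real) set topology" where
  "join_top X Y = quotient_top
     (prod_topology X (prod_topology Y (top_of_set {0..1})))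
     (\<lambda>(x,y,s) (x',y',s'). s = s' \<and> (s \<noteq> 1 \<longrightarrow> x = x') \<and> (s \<noteq> 0 \<longrightarrow> y = y'))"

end

theory Submission
  imports Defs
begin

text \<open>Coordinates \<open>z\<^sub>i\<^sub>j\<close> of \<open>\<complex>\<^sup>6\<close> come in three complementary pairs \<open>{ij, kl} = {1,2,3,4}\<close>, and
  \<open>T\<^sup>4\<close> acts on both members of each pair with total weight \<open>t\<^sub>1 t\<^sub>2 t\<^sub>3 t\<^sub>4\<close>. Hence
  \<open>d = (|z\<^sub>i\<^sub>j|\<^sup>2 - |z\<^sub>k\<^sub>l|\<^sup>2) \<in> \<real>\<^sup>3\<close> is invariant and \<open>w = (z\<^sub>i\<^sub>j z\<^sub>k\<^sub>l) \<in> \<complex>\<^sup>3\<close> is multiplied by one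
  common character. Since a pair \<open>(a, b)\<close> is determined by \<open>|a|\<^sup>2 - |b|\<^sup>2\<close> and \<open>ab\<close> up to
  \<open>(\<alpha>a, b/\<alpha>)\<close> with \<open>|\<alpha>| = 1\<close>, the \<open>T\<^sup>4 \<times> \<complex>\<^sup>*\<close>-orbits in \<open>\<complex>\<^sup>6 - 0\<close> correspond exactly to
  nonzero pairs \<open>(d, w)\<close> modulo \<open>(d, w) \<sim> (r d, r \<lambda> w)\<close> with \<open>r > 0\<close>, \<open>|\<lambda>| = 1\<close>.
  Writing such a class as \<open>(1 - s) x + s u\<close> with \<open>x \<in> S\<^sup>2\<close>, \<open>[u] \<in> \<complex>P\<^sup>2\<close>, \<open>s \<in> [0,1]\<close>
  identifies this space with the join \<open>S\<^sup>2 * \<complex>P\<^sup>2\<close>.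

  Concretely, both \<open>\<complex>P\<^sup>5/T\<^sup>4\<close> and \<open>S\<^sup>2 * \<complex>P\<^sup>2\<close> are compact and map continuously and
  injectively onto the same subset of \<open>\<real>\<^sup>3 \<times> \<complex>\<^sup>3\<^sup>\<times>\<^sup>3\<close> via the complete invariant
  \<open>(d, w) \<mapsto> (d/\<surd>N, w w\<^sup>*/N)\<close>, \<open>N = |d|\<^sup>2 + |w|\<^sup>2\<close>; a continuous bijection from a compact
  space to a Hausdorff space is a homeomorphism.\<close>

section \<open>Quotient topologies\<close>

definition equiv_on :: "'a set \<Rightarrow> ('a \<Rightarrow> 'a \<Rightarrow> bool) \<Rightarrow> bool" where
  "equiv_on S R \<longleftrightarrow> (\<forall>x\<in>S. R x x) \<and> (\<forall>x\<in>S. \<forall>y\<in>S. R x y \<longrightarrow> R y x)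
     \<and> (\<forall>x\<in>S. \<forall>y\<in>S. \<forall>z\<in>S. R x y \<longrightarrow> R y z \<longrightarrow> R x z)"

lemma equiv_on_kernel:
  assumes "\<And>x y. x \<in> S \<Longrightarrow> y \<in> S \<Longrightarrow> R x y \<longleftrightarrow> f x = f y"
  shows "equiv_on S R"
  using assms unfolding equiv_on_def by metis

definition quotient_class :: "'a topology \<Rightarrow> ('a \<Rightarrow> 'a \<Rightarrow> bool) \<Rightarrow> 'a \<Rightarrow> 'a set" where
  "quotient_class X R x = {y \<in> topspace X. R x y}"

lemma quotient_class_eq_iff:
  "\<lbrakk>equiv_on (topspace X) R; x \<in> topspace X; y \<in> topspace X\<rbrakk>
     \<Longrightarrow> quotient_class X R x = quotient_class X R y \<longleftrightarrow> R x y"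
  unfolding equiv_on_def quotient_class_def by blast

lemma quotient_class_eq_of_mem:
  "\<lbrakk>equiv_on (topspace X) R; x \<in> topspace X; y \<in> quotient_class X R x\<rbrakk>
     \<Longrightarrow> quotient_class X R y = quotient_class X R x"
  unfolding equiv_on_def quotient_class_def by blast

lemma Union_quotient_classes:
  "equiv_on (topspace X) R \<Longrightarrow> \<Union>(quotient_class X R ` topspace X) = topspace X"
  unfolding equiv_on_def quotient_class_def by blast

lemma Union_Int_quotient_classes:
  assumes "equiv_on (topspace X) R"
    and "S \<subseteq> quotient_class X R ` topspace X" "T \<subseteq> quotient_class X R ` topspace X"
  shows "\<Union>(S \<inter> T) = \<Union>S \<inter> \<Union>T"
proof
  show "\<Union>S \<inter> \<Union>T \<subseteq> \<Union>(S \<inter> T)"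
  proof
    fix y assume "y \<in> \<Union>S \<inter> \<Union>T"
    then obtain A B where AB: "A \<in> S" "B \<in> T" "y \<in> A" "y \<in> B" by blast
    then obtain a b where "a \<in> topspace X" "b \<in> topspace X"
        "A = quotient_class X R a" "B = quotient_class X R b"
      using assms(2,3) by blast
    then have "A = B"
      using quotient_class_eq_of_mem[OF assms(1)] AB by metis
    then show "y \<in> \<Union>(S \<inter> T)" using AB by blast
  qed
qed blast

lemma openin_quotient_top:
  assumes R: "equiv_on (topspace X) R"
  shows "openin (quotient_top X R) U \<longleftrightarrow>
           U \<subseteq> quotient_class X R ` topspace X \<and> openin X (\<Union>U)"
proof -
  let ?O = "\<lambda>U. U \<subseteq> quotient_class X R ` topspace X \<and> openin X (\<Union>U)"
  have "?O (S \<inter> T)" if "?O S" "?O T" for S T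
    using that Union_Int_quotient_classes[OF R, of S T] by (simp add: le_infI1 openin_Int)
  moreover have "?O (\<Union>K)" if "\<forall>S\<in>K. ?O S" for K
  proof -
    have "\<Union>(\<Union>K) = \<Union>(Union ` K)" by blast
    moreover have "openin X (\<Union>(Union ` K))" using that by (intro openin_Union) auto
    ultimately show ?thesis using that by (simp add: Union_least)
  qed
  ultimately have "istopology ?O"
    unfolding istopology_def by blast
  moreover have "quotient_top X R = topology ?O"
    unfolding quotient_top_def quotient_class_def ..
  ultimately show ?thesis
    by (simp add: topology_inverse')
qed

lemma topspace_quotient_top:
  assumes R: "equiv_on (topspace X) R"
  shows "topspace (quotient_top X R) = quotient_class X R ` topspace X"
proof -
  have "openin (quotient_top X R) (quotient_class X R ` topspace X)"
    by (simp add: openin_quotient_top[OF R] Union_quotient_classes[OF R])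
  then show ?thesis
    using openin_quotient_top[OF R, of "topspace (quotient_top X R)"] openin_subset by blast
qed

lemma quotient_map_quotient_class:
  assumes R: "equiv_on (topspace X) R"
  shows "quotient_map X (quotient_top X R) (quotient_class X R)"
  unfolding quotient_map_def
proof (intro conjI allI impI)
  show "quotient_class X R ` topspace X = topspace (quotient_top X R)"
    by (simp add: topspace_quotient_top[OF R])
next
  fix U assume U: "U \<subseteq> topspace (quotient_top X R)"
  have "{x \<in> topspace X. quotient_class X R x \<in> U} = \<Union>U"
  proof (intro subset_antisym subsetI)
    fix x assume "x \<in> {x \<in> topspace X. quotient_class X R x \<in> U}"
    moreover have "x \<in> quotient_class X R x" if "x \<in> topspace X"
      using R that by (simp add: equiv_on_def quotient_class_def)
    ultimately show "x \<in> \<Union>U" by blast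
  next
    fix y assume "y \<in> \<Union>U"
    then obtain a where a: "a \<in> topspace X" "quotient_class X R a \<in> U" "y \<in> quotient_class X R a"
      using U topspace_quotient_top[OF R] by auto
    moreover have "y \<in> topspace X"
      using a(3) by (simp add: quotient_class_def)
    ultimately show "y \<in> {x \<in> topspace X. quotient_class X R x \<in> U}"
      using quotient_class_eq_of_mem[OF R a(1) a(3)] by simp
  qed
  then show "openin X {x \<in> topspace X. quotient_class X R x \<in> U} = openin (quotient_top X R) U"
    using U by (simp add: openin_quotient_top[OF R] topspace_quotient_top[OF R])
qed

lemma compact_space_quotient_top:
  "\<lbrakk>equiv_on (topspace X) R; compact_space X\<rbrakk> \<Longrightarrow> compact_space (quotient_top X R)"
  by (metis compact_space_def image_compactin quotient_imp_continuous_map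
      quotient_imp_surjective_map quotient_map_quotient_class)

definition quotient_lift :: "('a \<Rightarrow> 'b) \<Rightarrow> 'a set \<Rightarrow> 'b" where
  "quotient_lift f C = f (SOME x. x \<in> C)"

lemma quotient_lift_class:
  assumes "equiv_on (topspace X) R" "x \<in> topspace X"
    and "\<And>x y. \<lbrakk>x \<in> topspace X; y \<in> topspace X; R x y\<rbrakk> \<Longrightarrow> f x = f y"
  shows "quotient_lift f (quotient_class X R x) = f x"
proof -
  have "x \<in> quotient_class X R x"
    using assms(1,2) by (simp add: equiv_on_def quotient_class_def)
  then have "(SOME y. y \<in> quotient_class X R x) \<in> quotient_class X R x"
    by (rule someI)
  then show ?thesis
    unfolding quotient_lift_def using assms(2,3) by (auto simp: quotient_class_def)
qed

lemma continuous_map_quotient_lift: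
  assumes R: "equiv_on (topspace X) R" and f: "continuous_map X Y f"
    and "\<And>x y. \<lbrakk>x \<in> topspace X; y \<in> topspace X; R x y\<rbrakk> \<Longrightarrow> f x = f y"
  shows "continuous_map (quotient_top X R) Y (quotient_lift f)"
proof (rule continuous_compose_quotient_map[OF quotient_map_quotient_class[OF R]])
  show "continuous_map X Y (quotient_lift f \<circ> quotient_class X R)"
    using f by (rule continuous_map_eq) (simp add: quotient_lift_class[OF R _ assms(3)])
qed

lemma quotient_top_homeomorphic_image:
  assumes X: "compact_space X" and Y: "Hausdorff_space Y"
    and f: "continuous_map X Y f"
    and fibres: "\<And>x y. \<lbrakk>x \<in> topspace X; y \<in> topspace X\<rbrakk> \<Longrightarrow> R x y \<longleftrightarrow> f x = f y"
  shows "quotient_top X R homeomorphic_space subtopology Y (f ` topspace X)"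
proof -
  have R: "equiv_on (topspace X) R"
    using fibres by (rule equiv_on_kernel)
  have compact: "compact_space (quotient_top X R)"
    using R X by (rule compact_space_quotient_top)
  let ?g = "quotient_lift f"
  have g_class: "?g (quotient_class X R x) = f x" if "x \<in> topspace X" for x
    using quotient_lift_class[OF R that] fibres by blast
  have image: "?g ` topspace (quotient_top X R) = f ` topspace X"
    by (simp add: topspace_quotient_top[OF R] image_image g_class cong: image_cong)
  have "inj_on ?g (topspace (quotient_top X R))"
  proof (rule inj_onI)
    fix C D
    assume "C \<in> topspace (quotient_top X R)" "D \<in> topspace (quotient_top X R)" "?g C = ?g D"
    then obtain x y where "x \<in> topspace X" "y \<in> topspace X" "f x = f y"
      and "C = quotient_class X R x" "D = quotient_class X R y"
      by (auto simp: topspace_quotient_top[OF R] g_class)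
    then show "C = D"
      by (simp add: quotient_class_eq_iff[OF R] fibres)
  qed
  moreover have "continuous_map (quotient_top X R) (subtopology Y (f ` topspace X)) ?g"
    using continuous_map_quotient_lift[OF R f] fibres image
    by (simp add: continuous_map_in_subtopology flip: image_subset_iff_funcset)
  ultimately have "homeomorphic_map (quotient_top X R) (subtopology Y (f ` topspace X)) ?g"
    using compact Y image continuous_map_image_subset_topspace[OF f]
    by (intro continuous_imp_homeomorphic_map Hausdorff_space_subtopology) auto
  then show ?thesis
    by (rule homeomorphic_map_imp_homeomorphic_space)
qed


section \<open>Complex projective space\<close>

lemma norm_vector_smult: "norm (c *s v) = cmod c * norm (v :: complex ^ 'n)"
  unfolding norm_vec_def by (simp add: L2_set_right_distrib norm_mult)

lemma scaleR_eq_vector_smult: "r *\<^sub>R v = complex_of_real r *s (v :: complex ^ 'n)"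
  by (simp add: vec_eq_iff scaleR_conv_of_real[where 'a = complex])

definition hermitian_outer :: "complex ^ 'n \<Rightarrow> complex ^ 'n ^ 'n" where
  "hermitian_outer w = (\<chi> k l. w$k * cnj (w$l))"

lemma continuous_on_hermitian_outer: "continuous_on S hermitian_outer"
  unfolding hermitian_outer_def by (intro continuous_intros)

lemma hermitian_outer_smult: "hermitian_outer (c *s v) = (cmod c)\<^sup>2 *\<^sub>R hermitian_outer v"
proof -
  have "c * x * cnj (c * y) = complex_of_real ((cmod c)\<^sup>2) * (x * cnj y)" for x y
    unfolding complex_norm_square by (simp add: mult_ac)
  then show ?thesis
    by (simp add: hermitian_outer_def vec_eq_iff scaleR_conv_of_real[where 'a = complex])
qed

lemma hermitian_outer_scaleR: "hermitian_outer (r *\<^sub>R v) = r\<^sup>2 *\<^sub>R hermitian_outer v"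
  by (simp add: scaleR_eq_vector_smult hermitian_outer_smult)

text \<open>Compare the entries of \<open>w w\<^sup>*\<close> with its column at a nonzero coordinate of \<open>w\<close>.\<close>
lemma hermitian_outer_eq_imp_phase:
  fixes a b :: "complex ^ 'n"
  assumes eq: "hermitian_outer a = hermitian_outer b"
  shows "\<exists>l. cmod l = 1 \<and> b = l *s a"
proof -
  have entries: "a$i * cnj (a$j) = b$i * cnj (b$j)" for i j
    using arg_cong[OF eq, of "\<lambda>M. M$i$j"] by (simp add: hermitian_outer_def)
  have norms: "cmod (a$i) = cmod (b$i)" for i
  proof -
    have "complex_of_real ((cmod (a$i))\<^sup>2) = complex_of_real ((cmod (b$i))\<^sup>2)"
      using entries[of i i] by (simp only: complex_norm_square)
    then have "(cmod (a$i))\<^sup>2 = (cmod (b$i))\<^sup>2"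
      by (simp only: of_real_eq_iff)
    then show ?thesis
      by (rule power2_eq_imp_eq) simp_all
  qed
  show ?thesis
  proof (cases "a = 0")
    case True
    then have "b = 0"
      using norms by (simp add: vec_eq_iff)
    with True show ?thesis by (intro exI[of _ 1]) simp
  next
    case False
    then obtain k where ak: "a$k \<noteq> 0" by (metis vec_eq_iff zero_index)
    then have bk: "b$k \<noteq> 0"
      using norms[of k] by auto
    define l where "l = b$k / a$k"
    have "cnj (a$k) * a$k = b$k * cnj (b$k)"
      using entries[of k k] by (simp only: mult.commute)
    then have ratio: "cnj (a$k) / cnj (b$k) = l"
      using ak bk by (simp add: l_def frac_eq_eq)
    have "b$i = l * a$i" for i
    proof -
      have "b$i = a$i * cnj (a$k) / cnj (b$k)"
        using entries[of i k] bk by (simp add: eq_divide_eq)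
      then show ?thesis
        by (simp only: times_divide_eq_right[symmetric] ratio mult.commute)
    qed
    then have "b = l *s a"
      by (simp add: vec_eq_iff)
    moreover have "cmod l = 1"
      using norms[of k] ak bk by (simp add: l_def norm_divide)
    ultimately show ?thesis by blast
  qed
qed

definition proportional :: "complex ^ 'n \<Rightarrow> complex ^ 'n \<Rightarrow> bool" where
  "proportional z w \<longleftrightarrow> (\<exists>c. c \<noteq> 0 \<and> w = c *s z)"

lemma proportional_smult: "c \<noteq> 0 \<Longrightarrow> proportional z (c *s z)"
  unfolding proportional_def by blast

definition line_projector :: "complex ^ 'n \<Rightarrow> complex ^ 'n ^ 'n" where
  "line_projector v = (1 / (norm v)\<^sup>2) *\<^sub>R hermitian_outer v"

lemma line_projector_eq_sgn: "line_projector v = hermitian_outer (sgn v)"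
  by (simp add: line_projector_def sgn_div_norm hermitian_outer_scaleR power_one_over
      power_inverse inverse_eq_divide)

lemma line_projector_smult: "c \<noteq> 0 \<Longrightarrow> line_projector (c *s v) = line_projector v"
  by (simp add: line_projector_def hermitian_outer_smult norm_vector_smult power_mult_distrib)

lemma continuous_on_line_projector: "continuous_on (UNIV - {0}) line_projector"
  unfolding line_projector_def
  by (intro continuous_intros continuous_on_hermitian_outer) auto

lemma line_projector_eq_iff:
  fixes v w :: "complex ^ 'n"
  assumes "v \<noteq> 0" "w \<noteq> 0"
  shows "line_projector v = line_projector w \<longleftrightarrow> proportional v w"
proof
  assume "line_projector v = line_projector w"
  then have "hermitian_outer (sgn v) = hermitian_outer (sgn w)"
    by (simp only: line_projector_eq_sgn)
  then obtain l where l: "cmod l = 1" "sgn w = l *s sgn v"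
    using hermitian_outer_eq_imp_phase by blast
  define c where "c = complex_of_real (norm w) * (l * complex_of_real (inverse (norm v)))"
  have "w = norm w *\<^sub>R sgn w"
    by (cases "w = 0") (simp_all add: sgn_div_norm)
  also have "\<dots> = norm w *\<^sub>R (l *s (inverse (norm v) *\<^sub>R v))"
    using l(2) by (simp only: sgn_div_norm)
  also have "\<dots> = c *s v"
    by (simp only: c_def scaleR_eq_vector_smult vector_smult_assoc)
  finally have "w = c *s v" .
  moreover have "c \<noteq> 0"
    using assms l(1) by (auto simp: c_def)
  ultimately show "proportional v w"
    unfolding proportional_def by blast
next
  show "proportional v w \<Longrightarrow> line_projector v = line_projector w"
    by (auto simp: proportional_def line_projector_smult)
qed

abbreviation nonzero_vectors :: "(complex ^ 'n) topology" where
  "nonzero_vectors \<equiv> top_of_set (UNIV - {0})"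

lemma equiv_on_proportional: "equiv_on (topspace nonzero_vectors) (proportional :: complex ^ 'n \<Rightarrow> _)"
  by (rule equiv_on_kernel[where f = line_projector]) (simp add: line_projector_eq_iff)

abbreviation line :: "complex ^ 'n \<Rightarrow> (complex ^ 'n) set" where
  "line v \<equiv> quotient_class nonzero_vectors proportional v"

lemma CP_eq_quotient_top: "CP TYPE('n::finite) = quotient_top nonzero_vectors proportional"
  unfolding CP_def proportional_def[abs_def] ..

lemma topspace_CP: "topspace (CP TYPE('n::finite)) = line ` (UNIV - {0})"
  by (simp add: CP_eq_quotient_top topspace_quotient_top[OF equiv_on_proportional])

lemma line_eq_iff: "\<lbrakk>v \<noteq> 0; w \<noteq> 0\<rbrakk> \<Longrightarrow> line v = line w \<longleftrightarrow> proportional v w"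
  using quotient_class_eq_iff[OF equiv_on_proportional, of v w] by simp

lemma line_sgn:
  assumes "v \<noteq> 0"
  shows "line (sgn v) = line v"
proof -
  have v: "complex_of_real (norm v) *s sgn v = v"
    using assms by (simp add: sgn_div_norm flip: scaleR_eq_vector_smult)
  have "complex_of_real (norm v) \<noteq> 0"
    using assms by simp
  then have "proportional (sgn v) v"
    using proportional_smult by (metis v)
  moreover have "sgn v \<noteq> 0"
    using assms by (simp add: sgn_zero_iff)
  ultimately show ?thesis
    using assms line_eq_iff by blast
qed

lemma compact_space_CP: "compact_space (CP TYPE('n::finite))"
proof -
  have "compactin nonzero_vectors (sphere (0 :: complex ^ 'n) 1)"
    by (auto simp: compactin_subtopology compact_sphere)
  moreover have "continuous_map nonzero_vectors (CP TYPE('n)) line"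
    unfolding CP_eq_quotient_top
    by (intro quotient_imp_continuous_map quotient_map_quotient_class equiv_on_proportional)
  ultimately have "compactin (CP TYPE('n)) (line ` sphere 0 1)"
    by (rule image_compactin)
  moreover have "line ` sphere 0 1 = topspace (CP TYPE('n))"
  proof -
    have "line v \<in> line ` sphere 0 1" if "v \<noteq> 0" for v :: "complex ^ 'n"
      using that line_sgn[OF that] by (metis image_eqI mem_sphere_0 norm_sgn)
    then show ?thesis
      by (auto simp: topspace_CP)
  qed
  ultimately show ?thesis
    by (simp add: compact_space_def)
qed

definition CP_projector :: "(complex ^ 'n) set \<Rightarrow> complex ^ 'n ^ 'n" where
  "CP_projector = quotient_lift line_projector"

lemma CP_projector_line: "v \<noteq> 0 \<Longrightarrow> CP_projector (line v) = hermitian_outer (sgn v)"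
  unfolding CP_projector_def line_projector_eq_sgn[symmetric]
  by (rule quotient_lift_class[OF equiv_on_proportional]) (auto simp: line_projector_eq_iff)

lemma continuous_map_CP_projector:
  "continuous_map (CP TYPE('n::finite)) euclidean (CP_projector :: _ \<Rightarrow> complex ^ 'n ^ 'n)"
  unfolding CP_eq_quotient_top CP_projector_def
  by (rule continuous_map_quotient_lift[OF equiv_on_proportional])
    (auto simp: continuous_on_line_projector line_projector_eq_iff)


section \<open>Pairs up to scaling and phase\<close>

text \<open>A complete invariant of nonzero pairs under \<open>(d, w) \<mapsto> (r d, r \<lambda> w)\<close>, \<open>r > 0\<close>, \<open>|\<lambda>| = 1\<close>.\<close>
definition pair_invariant ::
    "real ^ 'm \<Rightarrow> complex ^ 'n \<Rightarrow> (real ^ 'm) \<times> (complex ^ 'n ^ 'n)" where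
  "pair_invariant d w =
     (let N = (norm d)\<^sup>2 + (norm w)\<^sup>2 in ((1 / sqrt N) *\<^sub>R d, (1 / N) *\<^sub>R hermitian_outer w))"

lemma pair_invariant_scale:
  assumes r: "r > 0" and l: "cmod l = 1"
  shows "pair_invariant (r *\<^sub>R d) ((complex_of_real r * l) *s w) = pair_invariant d w"
proof -
  have "(norm (r *\<^sub>R d))\<^sup>2 + (norm ((complex_of_real r * l) *s w))\<^sup>2 = r\<^sup>2 * ((norm d)\<^sup>2 + (norm w)\<^sup>2)"
    using r l by (simp add: norm_vector_smult norm_mult power_mult_distrib algebra_simps)
  moreover have "sqrt (r\<^sup>2 * N) = r * sqrt N" for N
    using r by (simp add: real_sqrt_mult)
  ultimately show ?thesis
    using r l by (simp add: pair_invariant_def Let_def hermitian_outer_smult norm_mult)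
qed

lemma pair_invariant_eq_imp_scale:
  fixes d d' :: "real ^ 'm" and w w' :: "complex ^ 'n"
  assumes nz: "d \<noteq> 0 \<or> w \<noteq> 0" and nz': "d' \<noteq> 0 \<or> w' \<noteq> 0"
    and eq: "pair_invariant d w = pair_invariant d' w'"
  shows "\<exists>r>0. \<exists>l. cmod l = 1 \<and> d' = r *\<^sub>R d \<and> w' = (complex_of_real r * l) *s w"
proof -
  define N where "N = (norm d)\<^sup>2 + (norm w)\<^sup>2"
  define N' where "N' = (norm d')\<^sup>2 + (norm w')\<^sup>2"
  have N: "N > 0" and N': "N' > 0"
    using nz nz' by (auto simp: N_def N'_def add_pos_nonneg add_nonneg_pos)
  define r where "r = sqrt N' / sqrt N"
  have r: "r > 0" and r2: "r\<^sup>2 = N' / N"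
    using N N' by (simp_all add: r_def power_divide)
  have eq1: "(1 / sqrt N) *\<^sub>R d = (1 / sqrt N') *\<^sub>R d'"
    and eq2: "(1 / N) *\<^sub>R hermitian_outer w = (1 / N') *\<^sub>R hermitian_outer w'"
    using eq by (simp_all add: pair_invariant_def Let_def N_def N'_def)
  have "d' = sqrt N' *\<^sub>R ((1 / sqrt N') *\<^sub>R d')"
    using N' by simp
  also have "\<dots> = r *\<^sub>R d"
    unfolding eq1[symmetric] by (simp add: r_def)
  finally have d': "d' = r *\<^sub>R d" .
  have "hermitian_outer w' = N' *\<^sub>R ((1 / N') *\<^sub>R hermitian_outer w')"
    using N' by simp
  also have "\<dots> = hermitian_outer (r *\<^sub>R w)"
    unfolding eq2[symmetric] using N by (simp add: hermitian_outer_scaleR r2)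
  finally obtain l where l: "cmod l = 1" "w' = l *s (r *\<^sub>R w)"
    using hermitian_outer_eq_imp_phase by metis
  then have "w' = (complex_of_real r * l) *s w"
    by (simp add: scaleR_eq_vector_smult vector_smult_assoc mult.commute)
  with r l d' show ?thesis
    by blast
qed

lemma complex_pair_eq_0:
  "\<lbrakk>(cmod a)\<^sup>2 - (cmod b)\<^sup>2 = 0; a * b = 0\<rbrakk> \<Longrightarrow> a = 0 \<and> (b :: complex) = 0"
  by auto

lemma complex_pair_exists: "\<exists>a b :: complex. (cmod a)\<^sup>2 - (cmod b)\<^sup>2 = \<delta> \<and> a * b = \<omega>"
proof -
  define \<rho> where "\<rho> = sqrt (\<delta>\<^sup>2 + 4 * (cmod \<omega>)\<^sup>2)"
  have \<rho>2: "\<rho>\<^sup>2 = \<delta>\<^sup>2 + 4 * (cmod \<omega>)\<^sup>2" and "\<rho> \<ge> \<bar>\<delta>\<bar>"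
    unfolding \<rho>_def by (simp_all add: real_le_rsqrt)
  define A where "A = (\<rho> + \<delta>) / 2"
  have "A \<ge> 0"
    using \<open>\<rho> \<ge> \<bar>\<delta>\<bar>\<close> by (simp add: A_def)
  show ?thesis
  proof (cases "A = 0")
    case True
    then have "\<rho> = - \<delta>"
      by (simp add: A_def)
    then have "\<delta> \<le> 0" "\<omega> = 0"
      using \<rho>2 \<open>\<rho> \<ge> \<bar>\<delta>\<bar>\<close> by simp_all
    then have "(cmod 0)\<^sup>2 - (cmod (complex_of_real (sqrt (- \<delta>))))\<^sup>2 = \<delta> \<and> 0 * complex_of_real (sqrt (- \<delta>)) = \<omega>"
      by simp
    then show ?thesis by blast
  next
    case False
    with \<open>A \<ge> 0\<close> have A: "A > 0" by simp
    define a where "a = complex_of_real (sqrt A)"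
    have "a \<noteq> 0" "(cmod a)\<^sup>2 = A"
      using A by (simp_all add: a_def)
    moreover have "A\<^sup>2 - (cmod \<omega>)\<^sup>2 = \<delta> * A"
      using \<rho>2 by (simp add: A_def power2_eq_square field_simps)
    ultimately have "(cmod a)\<^sup>2 - (cmod (\<omega> / a))\<^sup>2 = \<delta> \<and> a * (\<omega> / a) = \<omega>"
      using A by (simp add: norm_divide power_divide field_simps power2_eq_square)
    then show ?thesis by blast
  qed
qed

lemma complex_pair_moduli:
  fixes a b a' b' :: complex
  assumes r: "r > 0"
    and diff: "(cmod a')\<^sup>2 - (cmod b')\<^sup>2 = r * ((cmod a)\<^sup>2 - (cmod b)\<^sup>2)"
    and prod: "cmod a' * cmod b' = r * (cmod a * cmod b)"
  shows "cmod a' = sqrt r * cmod a" "cmod b' = sqrt r * cmod b"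
proof -
  define X Y A B where "X = (cmod a')\<^sup>2" "Y = (cmod b')\<^sup>2" "A = (cmod a)\<^sup>2" "B = (cmod b)\<^sup>2"
  have XY: "X * Y = r\<^sup>2 * (A * B)"
    using arg_cong[OF prod, of "\<lambda>x. x\<^sup>2"] by (simp add: X_Y_A_B_def power_mult_distrib)
  have dXY: "X - Y = r * (A - B)"
    using diff by (simp add: X_Y_A_B_def)
  \<comment> \<open>\<open>X - Y\<close> and \<open>X Y\<close> determine \<open>X, Y \<ge> 0\<close>, since \<open>(X + Y)\<^sup>2 = (X - Y)\<^sup>2 + 4 X Y\<close>.\<close>
  have "(X + Y)\<^sup>2 = (r * (A + B))\<^sup>2"
  proof -
    have "(X + Y)\<^sup>2 = (X - Y)\<^sup>2 + 4 * (X * Y)"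
      by (simp add: power2_eq_square algebra_simps)
    also have "\<dots> = (r * (A + B))\<^sup>2"
      unfolding dXY XY by (simp add: power2_eq_square algebra_simps)
    finally show ?thesis .
  qed
  then have "X + Y = r * (A + B)"
    by (rule power2_eq_imp_eq) (use r in \<open>simp_all add: X_Y_A_B_def\<close>)
  with dXY have "X = r * A" "Y = r * B"
    by (simp_all add: algebra_simps)
  moreover have "cmod u = sqrt r * cmod v" if "(cmod u)\<^sup>2 = r * (cmod v)\<^sup>2" for u v :: complex
  proof -
    from that have "sqrt ((cmod u)\<^sup>2) = sqrt (r * (cmod v)\<^sup>2)"
      by simp
    then show ?thesis
      by (simp add: real_sqrt_mult)
  qed
  ultimately show "cmod a' = sqrt r * cmod a" "cmod b' = sqrt r * cmod b"
    by (simp_all add: X_Y_A_B_def)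
qed

lemma complex_unit_factor_exists:
  fixes u v :: complex
  assumes "cmod u = cmod v"
  shows "\<exists>\<alpha>. cmod \<alpha> = 1 \<and> u = \<alpha> * v"
proof (cases "v = 0")
  case True
  with assms show ?thesis by (intro exI[of _ 1]) simp
next
  case False
  with assms show ?thesis by (intro exI[of _ "u / v"]) (simp add: norm_divide)
qed

lemma complex_pair_unique_up_to_phase:
  fixes a b a' b' l :: complex
  assumes r: "r > 0" and l: "cmod l = 1"
    and diff: "(cmod a')\<^sup>2 - (cmod b')\<^sup>2 = r * ((cmod a)\<^sup>2 - (cmod b)\<^sup>2)"
    and prod: "a' * b' = (complex_of_real r * l) * (a * b)"
  shows "\<exists>\<alpha>. cmod \<alpha> = 1 \<and> a' = complex_of_real (sqrt r) * \<alpha> * a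
               \<and> b' = complex_of_real (sqrt r) * l * b / \<alpha>"
proof -
  have "cmod a' * cmod b' = r * (cmod a * cmod b)"
    using arg_cong[OF prod, of cmod] r l by (simp add: norm_mult)
  note moduli = complex_pair_moduli[OF r diff this]
  have sqrt_r: "complex_of_real (sqrt r) \<noteq> 0"
    "complex_of_real (sqrt r) * complex_of_real (sqrt r) = complex_of_real r"
    using r by (simp_all flip: of_real_mult)
  show ?thesis
  proof (cases "a = 0")
    case False
    obtain \<alpha> where \<alpha>: "cmod \<alpha> = 1" "a' = \<alpha> * (complex_of_real (sqrt r) * a)"
      using complex_unit_factor_exists[of a' "complex_of_real (sqrt r) * a"] moduli r
      by (auto simp: norm_mult)
    then have "\<alpha> \<noteq> 0" by auto
    have "b' = complex_of_real (sqrt r) * l * b / \<alpha>"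
      using prod False sqrt_r \<open>\<alpha> \<noteq> 0\<close> unfolding \<alpha>(2) sqrt_r(2)[symmetric]
      by (simp add: field_simps)
    with \<alpha> show ?thesis
      by (auto simp: mult_ac)
  next
    case True
    obtain \<beta> where \<beta>: "cmod \<beta> = 1" "b' = \<beta> * (complex_of_real (sqrt r) * l * b)"
      using complex_unit_factor_exists[of b' "complex_of_real (sqrt r) * l * b"] moduli r l
      by (auto simp: norm_mult)
    then have "a' = complex_of_real (sqrt r) * inverse \<beta> * a \<and>
        b' = complex_of_real (sqrt r) * l * b / inverse \<beta>"
      using True moduli by (simp add: divide_inverse mult_ac)
    with \<beta>(1) show ?thesis
      by (intro exI[of _ "inverse \<beta>"]) (simp add: norm_inverse)
  qed
qed

section \<open>Invariants of the torus action\<close>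

lemma continuous_on_vector3:
  "\<lbrakk>continuous_on S f; continuous_on S g; continuous_on S h\<rbrakk>
     \<Longrightarrow> continuous_on S (\<lambda>x. vector [f x, g x, h x] :: 'a::real_normed_vector ^ 3)"
proof -
  assume "continuous_on S f" "continuous_on S g" "continuous_on S h"
  then have "continuous_on S (\<lambda>x. \<chi> i::3. if i = 1 then f x else if i = 2 then g x else h x)"
    by (intro continuous_on_vec_lambda, case_tac "i = 1"; case_tac "i = 2") auto
  moreover have "(\<lambda>x. \<chi> i::3. if i = 1 then f x else if i = 2 then g x else h x) =
      (\<lambda>x. vector [f x, g x, h x])"
    by (rule ext) (simp add: vec_eq_iff forall_3)
  ultimately show ?thesis by metis
qed

lemma exhaust_6:
  fixes x :: 6
  shows "x = 1 \<or> x = 2 \<or> x = 3 \<or> x = 4 \<or> x = 5 \<or> x = 6"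
proof (induct x)
  case (of_int z)
  then have "z = 0 \<or> z = 1 \<or> z = 2 \<or> z = 3 \<or> z = 4 \<or> z = 5" by fastforce
  then show ?case by auto
qed

lemma forall_6: "(\<forall>i::6. P i) \<longleftrightarrow> P 1 \<and> P 2 \<and> P 3 \<and> P 4 \<and> P 5 \<and> P 6"
  by (metis exhaust_6)

lemma sym2_nth:
  "sym2 t $ 1 = t$1 * t$2" "sym2 t $ 2 = t$1 * t$3" "sym2 t $ 3 = t$1 * t$4"
  "sym2 t $ 4 = t$2 * t$3" "sym2 t $ 5 = t$2 * t$4" "sym2 t $ 6 = t$3 * t$4"
  by (simp_all add: sym2_def)

lemma act_nth: "act t z $ k = sym2 t $ k * z $ k"
  by (simp add: act_def)

lemma norm_sym2_torus4: "t \<in> torus4 \<Longrightarrow> cmod (sym2 t $ k) = 1"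
  using exhaust_6[of k] by (auto simp: torus4_def sym2_nth norm_mult)

text \<open>The coordinates \<open>1, \<dots>, 6\<close> stand for \<open>12, 13, 14, 23, 24, 34\<close>, so \<open>(1,6), (2,5), (3,4)\<close>
  are the complementary pairs.\<close>
definition moment_diff :: "complex ^ 6 \<Rightarrow> real ^ 3" where
  "moment_diff z = vector [(cmod (z$1))\<^sup>2 - (cmod (z$6))\<^sup>2,
     (cmod (z$2))\<^sup>2 - (cmod (z$5))\<^sup>2, (cmod (z$3))\<^sup>2 - (cmod (z$4))\<^sup>2]"

definition complementary_product :: "complex ^ 6 \<Rightarrow> complex ^ 3" where
  "complementary_product z = vector [z$1 * z$6, z$2 * z$5, z$3 * z$4]"

definition orbit_invariant :: "complex ^ 6 \<Rightarrow> (real ^ 3) \<times> (complex ^ 3 ^ 3)" where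
  "orbit_invariant z = pair_invariant (moment_diff z) (complementary_product z)"

lemma moment_diff_nth:
  "moment_diff z $ 1 = (cmod (z$1))\<^sup>2 - (cmod (z$6))\<^sup>2"
  "moment_diff z $ 2 = (cmod (z$2))\<^sup>2 - (cmod (z$5))\<^sup>2"
  "moment_diff z $ 3 = (cmod (z$3))\<^sup>2 - (cmod (z$4))\<^sup>2"
  by (simp_all add: moment_diff_def)

lemma complementary_product_nth:
  "complementary_product z $ 1 = z$1 * z$6"
  "complementary_product z $ 2 = z$2 * z$5"
  "complementary_product z $ 3 = z$3 * z$4"
  by (simp_all add: complementary_product_def)


lemma orbit_invariant_smult:
  assumes c: "c \<noteq> 0"
  shows "orbit_invariant (c *s z) = orbit_invariant z"
proof -
  define l where "l = c * c / complex_of_real ((cmod c)\<^sup>2)"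
  have l: "cmod l = 1"
    using c by (simp add: l_def norm_divide norm_mult power2_eq_square)
  have cc: "c * c = complex_of_real ((cmod c)\<^sup>2) * l"
    using c by (simp add: l_def)
  have "moment_diff (c *s z) = (cmod c)\<^sup>2 *\<^sub>R moment_diff z"
    by (simp add: vec_eq_iff forall_3 moment_diff_nth norm_mult power_mult_distrib algebra_simps)
  moreover have "complementary_product (c *s z) =
      (complex_of_real ((cmod c)\<^sup>2) * l) *s complementary_product z"
    unfolding vec_eq_iff forall_3 cc[symmetric]
    by (simp add: complementary_product_nth algebra_simps)
  moreover have "(cmod c)\<^sup>2 > 0"
    using c by simp
  ultimately show ?thesis
    unfolding orbit_invariant_def using l by (metis pair_invariant_scale)
qed

lemma orbit_invariant_act:
  assumes t: "t \<in> torus4"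
  shows "orbit_invariant (act t z) = orbit_invariant z"
proof -
  have "moment_diff (act t z) = 1 *\<^sub>R moment_diff z"
    using norm_sym2_torus4[OF t]
    by (simp add: vec_eq_iff forall_3 moment_diff_nth act_nth norm_mult)
  moreover have "complementary_product (act t z) =
      (complex_of_real 1 * (t$1 * t$2 * t$3 * t$4)) *s complementary_product z"
    by (simp add: vec_eq_iff forall_3 complementary_product_nth act_nth sym2_nth algebra_simps)
  moreover have "cmod (t$1 * t$2 * t$3 * t$4) = 1"
    using t by (simp add: torus4_def norm_mult)
  ultimately show ?thesis
    unfolding orbit_invariant_def by (metis pair_invariant_scale zero_less_one)
qed

lemma moment_diff_or_product_nonzero:
  assumes "z \<noteq> 0"
  shows "moment_diff z \<noteq> 0 \<or> complementary_product z \<noteq> 0"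
proof (rule ccontr)
  assume "\<not> ?thesis"
  then have "moment_diff z $ i = 0" "complementary_product z $ i = 0" for i
    by simp_all
  then have "z$1 = 0 \<and> z$6 = 0" "z$2 = 0 \<and> z$5 = 0" "z$3 = 0 \<and> z$4 = 0"
    by (metis complex_pair_eq_0 moment_diff_nth complementary_product_nth)+
  then have "z = 0"
    by (simp add: vec_eq_iff forall_6)
  with assms show False by simp
qed

lemma continuous_on_orbit_invariant: "continuous_on (UNIV - {0}) orbit_invariant"
proof -
  have "(norm (moment_diff z))\<^sup>2 + (norm (complementary_product z))\<^sup>2 \<noteq> 0" if "z \<noteq> 0" for z
    using moment_diff_or_product_nonzero[OF that] by (auto simp: add_nonneg_eq_0_iff)
  then show ?thesis
    unfolding orbit_invariant_def pair_invariant_def Let_def moment_diff_def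
      complementary_product_def hermitian_outer_def
    by (intro continuous_intros continuous_on_vector3) auto
qed

lemma moment_diff_product_surj:
  assumes "d \<noteq> 0 \<or> w \<noteq> 0"
  shows "\<exists>z. z \<noteq> 0 \<and> moment_diff z = d \<and> complementary_product z = w"
proof -
  obtain a1 b1 where 1: "(cmod a1)\<^sup>2 - (cmod b1)\<^sup>2 = d$1" "a1 * b1 = w$1"
    using complex_pair_exists by blast
  obtain a2 b2 where 2: "(cmod a2)\<^sup>2 - (cmod b2)\<^sup>2 = d$2" "a2 * b2 = w$2"
    using complex_pair_exists by blast
  obtain a3 b3 where 3: "(cmod a3)\<^sup>2 - (cmod b3)\<^sup>2 = d$3" "a3 * b3 = w$3"
    using complex_pair_exists by blast
  define z :: "complex ^ 6" where "z = (\<chi> i. if i = 1 then a1 else if i = 2 then a2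
      else if i = 3 then a3 else if i = 4 then b3 else if i = 5 then b2 else b1)"
  have "z$1 = a1" "z$2 = a2" "z$3 = a3" "z$4 = b3" "z$5 = b2" "z$6 = b1"
    by (simp_all add: z_def)
  then have "moment_diff z = d" "complementary_product z = w"
    using 1 2 3 by (simp_all add: vec_eq_iff forall_3 moment_diff_nth complementary_product_nth)
  moreover have "z \<noteq> 0"
  proof
    assume "z = 0"
    then have "moment_diff z = 0" "complementary_product z = 0"
      by (simp_all add: vec_eq_iff forall_3 moment_diff_nth complementary_product_nth)
    with assms calculation show False by simp
  qed
  ultimately show ?thesis by blast
qed

text \<open>The witness is \<open>t = (t\<^sub>1, \<alpha>\<^sub>1/t\<^sub>1, \<alpha>\<^sub>2/t\<^sub>1, \<alpha>\<^sub>3/t\<^sub>1)\<close> with \<open>t\<^sub>1\<^sup>2 = \<alpha>\<^sub>1 \<alpha>\<^sub>2 \<alpha>\<^sub>3 / l\<close>.\<close>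
lemma sym2_torus4_phases:
  assumes "cmod \<alpha>1 = 1" "cmod \<alpha>2 = 1" "cmod \<alpha>3 = 1" "cmod l = 1"
  obtains t where "t \<in> torus4" "sym2 t $ 1 = \<alpha>1" "sym2 t $ 2 = \<alpha>2" "sym2 t $ 3 = \<alpha>3"
    "sym2 t $ 4 = l / \<alpha>3" "sym2 t $ 5 = l / \<alpha>2" "sym2 t $ 6 = l / \<alpha>1"
proof -
  have nonzero: "\<alpha>1 \<noteq> 0" "\<alpha>2 \<noteq> 0" "\<alpha>3 \<noteq> 0" "l \<noteq> 0"
    using assms by auto
  define t1 where "t1 = csqrt (\<alpha>1 * \<alpha>2 * \<alpha>3 / l)"
  have t1: "cmod t1 = 1" "t1 * t1 = \<alpha>1 * \<alpha>2 * \<alpha>3 / l"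
    using assms by (simp_all add: t1_def norm_mult norm_divide flip: power2_eq_square)
  then have "t1 \<noteq> 0" by auto
  define t :: "complex ^ 4" where
    "t = (\<chi> i. if i = 1 then t1 else if i = 2 then \<alpha>1 / t1 else if i = 3 then \<alpha>2 / t1 else \<alpha>3 / t1)"
  have t_nth: "t$1 = t1" "t$2 = \<alpha>1 / t1" "t$3 = \<alpha>2 / t1" "t$4 = \<alpha>3 / t1"
    by (simp_all add: t_def)
  have "\<alpha>1 * \<alpha>2 / (t1 * t1) = l / \<alpha>3" "\<alpha>1 * \<alpha>3 / (t1 * t1) = l / \<alpha>2"
    "\<alpha>2 * \<alpha>3 / (t1 * t1) = l / \<alpha>1"
    unfolding t1(2) using nonzero by (simp_all add: field_simps)
  moreover have "t \<in> torus4"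
    using t1 assms by (simp add: torus4_def forall_4 t_nth norm_divide)
  ultimately show thesis
    using \<open>t1 \<noteq> 0\<close> by (intro that[of t]) (simp_all add: sym2_nth t_nth field_simps)
qed

lemma orbit_invariant_eq_imp_orbit:
  assumes z: "z \<noteq> 0" and z': "z' \<noteq> 0" and eq: "orbit_invariant z = orbit_invariant z'"
  shows "\<exists>c t. c \<noteq> 0 \<and> t \<in> torus4 \<and> z' = c *s act t z"
proof -
  obtain r l where r: "r > 0" and l: "cmod l = 1"
    and d: "moment_diff z' = r *\<^sub>R moment_diff z"
    and w: "complementary_product z' = (complex_of_real r * l) *s complementary_product z"
    using pair_invariant_eq_imp_scale[OF moment_diff_or_product_nonzero[OF z]
        moment_diff_or_product_nonzero[OF z'] eq[unfolded orbit_invariant_def]]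
    by blast
  have dk: "moment_diff z' $ k = r * moment_diff z $ k"
    and wk: "complementary_product z' $ k = (complex_of_real r * l) * complementary_product z $ k" for k
    using d w by simp_all
  note pair = complex_pair_unique_up_to_phase[OF r l]
  obtain \<alpha>1 where a1: "cmod \<alpha>1 = 1" "z'$1 = complex_of_real (sqrt r) * \<alpha>1 * z$1"
      "z'$6 = complex_of_real (sqrt r) * l * z$6 / \<alpha>1"
    using pair[OF dk[of 1, unfolded moment_diff_nth] wk[of 1, unfolded complementary_product_nth]]
    by blast
  obtain \<alpha>2 where a2: "cmod \<alpha>2 = 1" "z'$2 = complex_of_real (sqrt r) * \<alpha>2 * z$2"
      "z'$5 = complex_of_real (sqrt r) * l * z$5 / \<alpha>2"
    using pair[OF dk[of 2, unfolded moment_diff_nth] wk[of 2, unfolded complementary_product_nth]]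
    by blast
  obtain \<alpha>3 where a3: "cmod \<alpha>3 = 1" "z'$3 = complex_of_real (sqrt r) * \<alpha>3 * z$3"
      "z'$4 = complex_of_real (sqrt r) * l * z$4 / \<alpha>3"
    using pair[OF dk[of 3, unfolded moment_diff_nth] wk[of 3, unfolded complementary_product_nth]]
    by blast
  obtain t where "t \<in> torus4" "sym2 t $ 1 = \<alpha>1" "sym2 t $ 2 = \<alpha>2" "sym2 t $ 3 = \<alpha>3"
    "sym2 t $ 4 = l / \<alpha>3" "sym2 t $ 5 = l / \<alpha>2" "sym2 t $ 6 = l / \<alpha>1"
    using sym2_torus4_phases[OF a1(1) a2(1) a3(1) l] .
  moreover from this have "z' = complex_of_real (sqrt r) *s act t z"
    using a1 a2 a3 by (simp add: vec_eq_iff forall_6 act_nth algebra_simps)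
  moreover have "complex_of_real (sqrt r) \<noteq> 0"
    using r by simp
  ultimately show ?thesis
    by blast
qed


section \<open>The orbit space\<close>

lemma mem_line_iff: "y \<in> line v \<longleftrightarrow> y \<noteq> 0 \<and> proportional v y"
  by (simp add: quotient_class_def)

lemma act_eq_0_iff:
  assumes "t \<in> torus4"
  shows "act t z = 0 \<longleftrightarrow> z = 0"
proof -
  have "sym2 t $ k \<noteq> 0" for k
    using norm_sym2_torus4[OF assms, of k] by auto
  then show ?thesis
    by (simp add: vec_eq_iff act_nth)
qed

lemma torus_related_lines_iff:
  assumes v: "v \<noteq> 0" and w: "w \<noteq> 0"
  shows "(\<exists>z\<in>line v. \<exists>t\<in>torus4. act t z \<in> line w) \<longleftrightarrow> orbit_invariant v = orbit_invariant w"
proof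
  assume "\<exists>z\<in>line v. \<exists>t\<in>torus4. act t z \<in> line w"
  then obtain c c' t where t: "t \<in> torus4" and "c \<noteq> 0" "c' \<noteq> 0"
    and "act t (c *s v) = c' *s w"
    by (auto simp: mem_line_iff proportional_def)
  then have "orbit_invariant (act t (c *s v)) = orbit_invariant (c' *s w)"
    by simp
  with t \<open>c \<noteq> 0\<close> \<open>c' \<noteq> 0\<close> show "orbit_invariant v = orbit_invariant w"
    by (simp add: orbit_invariant_smult orbit_invariant_act)
next
  assume "orbit_invariant v = orbit_invariant w"
  then obtain c t where c: "c \<noteq> 0" and t: "t \<in> torus4" and wv: "w = c *s act t v"
    using orbit_invariant_eq_imp_orbit[OF v w] by blast
  have "act t v = inverse c *s w"
    using c by (simp add: wv vector_smult_assoc)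
  then have "act t v \<in> line w"
    using c t v w by (simp add: mem_line_iff act_eq_0_iff proportional_smult)
  moreover have "v \<in> line v"
    using v proportional_smult[of 1 v] by (simp add: mem_line_iff)
  ultimately show "\<exists>z\<in>line v. \<exists>t\<in>torus4. act t z \<in> line w"
    using t by blast
qed

lemma quotient_lift_orbit_invariant_line:
  "v \<noteq> 0 \<Longrightarrow> quotient_lift orbit_invariant (line v) = orbit_invariant v"
  by (rule quotient_lift_class[OF equiv_on_proportional])
    (auto simp: proportional_def orbit_invariant_smult)

lemma CP5_mod_T4_homeomorphic_orbit_invariants:
  "CP5_mod_T4 homeomorphic_space subtopology euclidean (orbit_invariant ` (UNIV - {0}))"
proof -
  have continuous: "continuous_map (CP TYPE(6)) euclidean (quotient_lift orbit_invariant)"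
    unfolding CP_eq_quotient_top
    by (rule continuous_map_quotient_lift[OF equiv_on_proportional])
      (auto simp: continuous_on_orbit_invariant proportional_def orbit_invariant_smult)
  have image: "quotient_lift orbit_invariant ` topspace (CP TYPE(6)) = orbit_invariant ` (UNIV - {0})"
    unfolding topspace_CP image_image
    by (rule image_cong) (simp_all add: quotient_lift_orbit_invariant_line)
  have fibres: "(\<exists>z\<in>A. \<exists>t\<in>torus4. act t z \<in> B) \<longleftrightarrow>
      quotient_lift orbit_invariant A = quotient_lift orbit_invariant B"
    if A: "A \<in> topspace (CP TYPE(6))" and B: "B \<in> topspace (CP TYPE(6))" for A B
  proof -
    obtain v where "A = line v" "v \<in> UNIV - {0}"
      using A unfolding topspace_CP by (rule imageE)
    moreover obtain w where "B = line w" "w \<in> UNIV - {0}"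
      using B unfolding topspace_CP by (rule imageE)
    ultimately show ?thesis
      by (simp add: quotient_lift_orbit_invariant_line torus_related_lines_iff)
  qed
  show ?thesis
    unfolding CP5_mod_T4_def image[symmetric]
    by (rule quotient_top_homeomorphic_image[OF compact_space_CP Hausdorff_space_euclidean
          continuous fibres])
qed


section \<open>The join\<close>

text \<open>Written through \<open>w w\<^sup>*\<close> rather than \<open>w\<close>, so that it descends to \<open>\<complex>P\<^sup>2\<close> and is
  visibly constant on the collapsed ends \<open>s = 0\<close> and \<open>s = 1\<close> of the join.\<close>
definition join_map :: "real ^ 'm \<Rightarrow> complex ^ 'n ^ 'n \<Rightarrow> real \<Rightarrow> (real ^ 'm) \<times> (complex ^ 'n ^ 'n)" where
  "join_map x H s = (((1 - s) / sqrt ((1 - s)\<^sup>2 + s\<^sup>2)) *\<^sub>R x, (s\<^sup>2 / ((1 - s)\<^sup>2 + s\<^sup>2)) *\<^sub>R H)"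

lemma join_denominator_pos: "(1 - s)\<^sup>2 + (s::real)\<^sup>2 > 0"
  by (cases "s = 0") (auto simp: add_pos_nonneg add_nonneg_pos)

lemma join_map_0: "join_map x H 0 = (x, 0)"
  and join_map_1: "join_map x H 1 = (0, H)"
  by (simp_all add: join_map_def)

lemma join_map_eq_pair_invariant:
  assumes "norm x = 1" "norm u = 1"
  shows "join_map x (hermitian_outer u) s = pair_invariant ((1 - s) *\<^sub>R x) (s *\<^sub>R u)"
  using assms
  by (simp add: join_map_def pair_invariant_def Let_def hermitian_outer_scaleR power_mult_distrib
      divide_inverse mult.commute)

abbreviation join_space :: "((real ^ 3) \<times> (complex ^ 3) set \<times> real) topology" where
  "join_space \<equiv> prod_topology (top_of_set (sphere 0 1)) (prod_topology (CP TYPE(3)) (top_of_set {0..1}))"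

definition join_point_map :: "(real ^ 3) \<times> (complex ^ 3) set \<times> real \<Rightarrow> (real ^ 3) \<times> (complex ^ 3 ^ 3)" where
  "join_point_map = (\<lambda>(x, C, s). join_map x (CP_projector C) s)"

lemma continuous_map_join_point_map: "continuous_map join_space euclidean join_point_map"
proof -
  have "continuous_map join_space euclidean fst"
    by (rule continuous_map_into_fulltopology[OF continuous_map_fst])
  moreover have "continuous_map join_space euclidean (\<lambda>p. CP_projector (fst (snd p)))"
    using continuous_map_compose[OF continuous_map_compose[OF continuous_map_snd continuous_map_fst]
        continuous_map_CP_projector]
    by (simp add: o_def)
  moreover have "continuous_map join_space euclidean (\<lambda>p. snd (snd p))"
    using continuous_map_into_fulltopology[OF continuous_map_compose[OF continuous_map_snd
          continuous_map_snd]]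
    by (simp add: o_def)
  ultimately have "continuous_map join_space (prod_topology euclidean (prod_topology euclidean euclidean))
      (\<lambda>p. (fst p, CP_projector (fst (snd p)), snd (snd p)))"
    by (intro continuous_map_pairedI)
  then have "continuous_map join_space euclidean (\<lambda>p. (fst p, CP_projector (fst (snd p)), snd (snd p)))"
    by simp
  moreover have "continuous_map euclidean euclidean
      (\<lambda>(x :: real ^ 3, H :: complex ^ 3 ^ 3, s). join_map x H s)"
    unfolding continuous_map_iff_continuous2 join_map_def case_prod_unfold
    by (intro continuous_intros) (use join_denominator_pos in auto)
  ultimately have "continuous_map join_space euclidean
      ((\<lambda>(x, H, s). join_map x H s) \<circ> (\<lambda>p. (fst p, CP_projector (fst (snd p)), snd (snd p))))"
    by (rule continuous_map_compose)
  then show ?thesis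
    by (simp add: join_point_map_def o_def case_prod_unfold)
qed

lemma join_point_map_line:
  assumes "norm x = 1" "v \<noteq> 0"
  shows "join_point_map (x, line v, s) = pair_invariant ((1 - s) *\<^sub>R x) (s *\<^sub>R sgn v)"
  using assms by (simp add: join_point_map_def CP_projector_line join_map_eq_pair_invariant norm_sgn)

lemma topspace_join_space_elim:
  assumes "a \<in> topspace join_space"
  obtains x v s where "a = (x, line v, s)" "norm x = 1" "v \<noteq> 0" "0 \<le> s" "s \<le> 1"
proof -
  obtain x C s where a: "a = (x, C, s)"
    by (metis prod.exhaust)
  have "C \<in> topspace (CP TYPE(3))"
    using assms a by auto
  then obtain v where "C = line v" "v \<in> UNIV - {0}"
    unfolding topspace_CP by (rule imageE)
  with a assms that show thesis
    by auto
qed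

lemma join_pair_nonzero:
  fixes x :: "'a::real_normed_vector" and v :: "'b::real_normed_vector"
  shows "\<lbrakk>norm x = 1; v \<noteq> 0\<rbrakk> \<Longrightarrow> (1 - s) *\<^sub>R x \<noteq> 0 \<or> s *\<^sub>R sgn v \<noteq> 0"
  by (cases "s = 1") (auto simp: sgn_zero_iff)

lemma join_point_map_eq_imp:
  assumes x: "norm x = 1" and v: "v \<noteq> 0" and s: "0 \<le> s" "s \<le> 1"
    and x': "norm x' = 1" and v': "v' \<noteq> 0" and s': "0 \<le> s'" "s' \<le> 1"
    and eq: "join_point_map (x, line v, s) = join_point_map (x', line v', s')"
  shows "s = s'" "s \<noteq> 1 \<Longrightarrow> x = x'" "s \<noteq> 0 \<Longrightarrow> line v = line v'"
proof -
  have "pair_invariant ((1 - s) *\<^sub>R x) (s *\<^sub>R sgn v) = pair_invariant ((1 - s') *\<^sub>R x') (s' *\<^sub>R sgn v')"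
    using eq by (simp add: join_point_map_line x v x' v')
  then obtain r l where r: "r > 0" and l: "cmod l = 1"
    and eq1: "(1 - s') *\<^sub>R x' = r *\<^sub>R ((1 - s) *\<^sub>R x)"
    and eq2: "s' *\<^sub>R sgn v' = (complex_of_real r * l) *s (s *\<^sub>R sgn v)"
    using pair_invariant_eq_imp_scale join_pair_nonzero[OF x v] join_pair_nonzero[OF x' v'] by metis
  have "1 - s' = r * (1 - s)"
    using arg_cong[OF eq1, of norm] x x' s s' r by simp
  moreover have "s' = r * s"
    using arg_cong[OF eq2, of norm] v v' s s' r l
    by (simp add: norm_vector_smult norm_mult norm_sgn)
  ultimately have r1: "r = 1" and ss': "s = s'"
    by (simp_all add: algebra_simps)
  then show "s = s'" by simp
  show "x = x'" if "s \<noteq> 1"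
    using eq1 that by (simp add: r1 ss')
  show "line v = line v'" if "s \<noteq> 0"
  proof -
    have "complex_of_real s *s sgn v' = complex_of_real s *s (l *s sgn v)"
      using eq2 by (simp add: r1 ss' scaleR_eq_vector_smult vector_smult_assoc mult.commute)
    then have "sgn v' = l *s sgn v"
      using that by (metis vector_mul_lcancel of_real_eq_0_iff)
    then have "line_projector v = line_projector v'"
      using l by (simp add: line_projector_eq_sgn hermitian_outer_smult)
    then show ?thesis
      using v v' by (simp add: line_eq_iff line_projector_eq_iff)
  qed
qed

lemma join_point_map_eq_iff:
  assumes "norm x = 1" "v \<noteq> 0" "0 \<le> s" "s \<le> 1"
    and "norm x' = 1" "v' \<noteq> 0" "0 \<le> s'" "s' \<le> 1"
  shows "join_point_map (x, line v, s) = join_point_map (x', line v', s') \<longleftrightarrow>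
           s = s' \<and> (s \<noteq> 1 \<longrightarrow> x = x') \<and> (s \<noteq> 0 \<longrightarrow> line v = line v')"
proof
  assume "join_point_map (x, line v, s) = join_point_map (x', line v', s')"
  then show "s = s' \<and> (s \<noteq> 1 \<longrightarrow> x = x') \<and> (s \<noteq> 0 \<longrightarrow> line v = line v')"
    using join_point_map_eq_imp[OF assms] by simp
next
  assume "s = s' \<and> (s \<noteq> 1 \<longrightarrow> x = x') \<and> (s \<noteq> 0 \<longrightarrow> line v = line v')"
  then show "join_point_map (x, line v, s) = join_point_map (x', line v', s')"
    by (cases "s = 0 \<or> s = 1") (auto simp: join_point_map_def join_map_0 join_map_1)
qed

lemma join_point_map_in_orbit_invariants:
  assumes "a \<in> topspace join_space"
  shows "join_point_map a \<in> orbit_invariant ` (UNIV - {0})"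
proof -
  obtain x v s where a: "a = (x, line v, s)" and x: "norm x = 1" and v: "v \<noteq> 0"
      and "0 \<le> s" "s \<le> 1"
    using assms by (rule topspace_join_space_elim)
  obtain z where z: "z \<noteq> 0" "moment_diff z = (1 - s) *\<^sub>R x" "complementary_product z = s *\<^sub>R sgn v"
    using moment_diff_product_surj[OF join_pair_nonzero[OF x v]] by blast
  have "join_point_map a = orbit_invariant z"
    unfolding a join_point_map_line[OF x v] orbit_invariant_def z(2,3) ..
  with z(1) show ?thesis
    by (intro rev_image_eqI[of z]) simp_all
qed

text \<open>Write \<open>(d, w) = \<rho> ((1 - s) x + s u)\<close> with \<open>\<rho> = |d| + |w|\<close>; the direction \<open>x\<close> (or \<open>u\<close>) is
  arbitrary when \<open>d = 0\<close> (or \<open>w = 0\<close>).\<close>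
lemma orbit_invariant_in_join_image:
  assumes "z \<noteq> 0"
  shows "orbit_invariant z \<in> join_point_map ` topspace join_space"
proof -
  define d w where "d = moment_diff z" "w = complementary_product z"
  have nz: "d \<noteq> 0 \<or> w \<noteq> 0"
    using moment_diff_or_product_nonzero[OF assms] by (simp add: d_w_def)
  define \<rho> where "\<rho> = norm d + norm w"
  have \<rho>: "\<rho> > 0"
    using nz by (auto simp: \<rho>_def add_pos_nonneg add_nonneg_pos)
  define s where "s = norm w / \<rho>"
  have s: "0 \<le> s" "s \<le> 1" "1 - s = norm d / \<rho>"
    using \<rho> by (simp_all add: s_def \<rho>_def field_simps)
  define x :: "real ^ 3" where "x = (if d = 0 then axis 1 1 else sgn d)"
  define v :: "complex ^ 3" where "v = (if w = 0 then axis 1 1 else w)"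
  have x: "norm x = 1" and v: "v \<noteq> 0"
    by (simp_all add: x_def v_def norm_sgn)
  have "(1 - s) *\<^sub>R x = (1 / \<rho>) *\<^sub>R d"
    by (simp add: s x_def sgn_div_norm)
  moreover have "s *\<^sub>R sgn v = (complex_of_real (1 / \<rho>) * 1) *s w"
    by (simp add: s_def v_def sgn_div_norm scaleR_eq_vector_smult vector_smult_assoc)
  ultimately have "join_point_map (x, line v, s) =
      pair_invariant ((1 / \<rho>) *\<^sub>R d) ((complex_of_real (1 / \<rho>) * 1) *s w)"
    by (simp only: join_point_map_line[OF x v])
  also have "\<dots> = orbit_invariant z"
    using \<rho> by (simp only: pair_invariant_scale norm_one orbit_invariant_def d_w_def
        zero_less_divide_1_iff)
  moreover have "(x, line v, s) \<in> topspace join_space"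
    using x v s by (auto simp: topspace_CP)
  ultimately show ?thesis
    by (metis image_eqI)
qed

lemma join_point_map_image: "join_point_map ` topspace join_space = orbit_invariant ` (UNIV - {0})"
proof (rule subset_antisym)
  show "join_point_map ` topspace join_space \<subseteq> orbit_invariant ` (UNIV - {0})"
    using join_point_map_in_orbit_invariants by (rule image_subsetI)
  show "orbit_invariant ` (UNIV - {0}) \<subseteq> join_point_map ` topspace join_space"
    using orbit_invariant_in_join_image by (intro image_subsetI) simp
qed

lemma join_homeomorphic_orbit_invariants:
  "join_top (top_of_set (sphere (0 :: real ^ 3) 1)) (CP TYPE(3)) homeomorphic_space
     subtopology euclidean (orbit_invariant ` (UNIV - {0}))"
proof -
  have "compact_space join_space"
    by (simp add: compact_space_prod_topology compact_space_CP compact_space_subtopology)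
  moreover have "(\<lambda>(x, y, s) (x', y', s'). s = s' \<and> (s \<noteq> 1 \<longrightarrow> x = x') \<and> (s \<noteq> 0 \<longrightarrow> y = y')) a b
      \<longleftrightarrow> join_point_map a = join_point_map b"
    if a: "a \<in> topspace join_space" and b: "b \<in> topspace join_space" for a b
  proof -
    obtain x v s where "a = (x, line v, s)" "norm x = 1" "v \<noteq> 0" "0 \<le> s" "s \<le> 1"
      using a by (rule topspace_join_space_elim)
    moreover obtain x' v' s' where "b = (x', line v', s')" "norm x' = 1" "v' \<noteq> 0" "0 \<le> s'" "s' \<le> 1"
      using b by (rule topspace_join_space_elim)
    ultimately show ?thesis
      by (simp add: join_point_map_eq_iff)
  qed
  ultimately show ?thesis
    unfolding join_top_def join_point_map_image[symmetric]
    by (rule quotient_top_homeomorphic_image[OF _ Hausdorff_space_euclidean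
          continuous_map_join_point_map])
qed


theorem mainTheorem13:
  shows "CP5_mod_T4 homeomorphic_space
           join_top (top_of_set (sphere (0 :: real ^ 3) 1)) (CP TYPE(3))"
  by (rule homeomorphic_space_trans[OF CP5_mod_T4_homeomorphic_orbit_invariants
        join_homeomorphic_orbit_invariants[THEN homeomorphic_space_sym[THEN iffD1]]])

end
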